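(* Let $V$ be a finite nonempty set, let $d \ge 1$ be an integer, and let $R = (\le_1, \ldots, \le_d)$ be a $d$-representation on $V$. Then the supremum section $\Sigma(R)$ is collapsible.
   Context: A $d$-representation on $V$ is a family of $d$ linear orders $\le_1,\ldots,\le_d$ on $V$. For a linear order $\le$ on $V$, $x\in V$ and $F\subseteq V$, $x$ dominates $F$ in $\le$ if $f\le x$ for every $f\in F$; $x$ dominates $F$ in $R$ if $x$ dominates $F$ in some $\le_i$. The supremum section $\Sigma(R)$ is the set of all subsets $F\subseteq V$ such that every $v\in V$ dominates $F$ in $R$ (in particular $\emptyset\in\Sigma(R)$); it is an abstract simplicial complex (a family of subsets of $V$ closed under taking subsets), whose elements are called faces and whose inclusion-maximal faces are called facets. A face $F$ of a simplicial complex $\Delta$ is free if it is nonempty, not maximal, and contained in exactly one facet of $\Delta$. $\Delta$ collapses to $\Gamma$ if there are simplicial complexes $\Delta_1=\Delta,\Delta_2,\ldots,\Delta_k=\Gamma$ and, for each $i\le k-1$, a free face $F_i$ of $\Delta_i$ with $\Delta_{i+1}=\Delta_i\setminus\{F\in\Delta_i : F_i\subseteq F\}$. $\Delta$ is collapsible if it collapses to a point, i.e. to a complex of the form $\{\emptyset,\{v\}\}$. *)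

theory Defs
  imports Main
begin

definition d_representation :: "'a set \<Rightarrow> nat \<Rightarrow> (nat \<Rightarrow> 'a rel) \<Rightarrow> bool" where
  "d_representation V d R \<longleftrightarrow> (\<forall>i<d. linear_order_on V (R i))"

definition dominates_in_order :: "'a rel \<Rightarrow> 'a \<Rightarrow> 'a set \<Rightarrow> bool" where
  "dominates_in_order r x F \<longleftrightarrow> (\<forall>f\<in>F. (f, x) \<in> r)"

definition dominates_in_rep :: "nat \<Rightarrow> (nat \<Rightarrow> 'a rel) \<Rightarrow> 'a \<Rightarrow> 'a set \<Rightarrow> bool" where
  "dominates_in_rep d R x F \<longleftrightarrow> (\<exists>i<d. dominates_in_order (R i) x F)"

definition supremum_section :: "'a set \<Rightarrow> nat \<Rightarrow> (nat \<Rightarrow> 'a rel) \<Rightarrow> 'a set set" where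
  "supremum_section V d R = {F. F \<subseteq> V \<and> (\<forall>v\<in>V. dominates_in_rep d R v F)}"

definition facet :: "'a set set \<Rightarrow> 'a set \<Rightarrow> bool" where
  "facet \<Delta> G \<longleftrightarrow> G \<in> \<Delta> \<and> (\<forall>H\<in>\<Delta>. G \<subseteq> H \<longrightarrow> H = G)"

definition free_face :: "'a set set \<Rightarrow> 'a set \<Rightarrow> bool" where
  "free_face \<Delta> F \<longleftrightarrow> F \<in> \<Delta> \<and> F \<noteq> {} \<and> \<not> facet \<Delta> F \<and>
     (\<exists>!G. facet \<Delta> G \<and> F \<subseteq> G)"

definition elementary_collapse :: "'a set set \<Rightarrow> 'a set set \<Rightarrow> bool" where
  "elementary_collapse \<Delta> \<Gamma> \<longleftrightarrow>
     (\<exists>F. free_face \<Delta> F \<and> \<Gamma> = \<Delta> - {G \<in> \<Delta>. F \<subseteq> G})"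

definition collapses_to :: "'a set set \<Rightarrow> 'a set set \<Rightarrow> bool" where
  "collapses_to \<Delta> \<Gamma> \<longleftrightarrow> elementary_collapse\<^sup>*\<^sup>* \<Delta> \<Gamma>"

definition collapsible :: "'a set set \<Rightarrow> bool" where
  "collapsible \<Delta> \<longleftrightarrow> (\<exists>v. collapses_to \<Delta> {{}, {v}})"

end

theory Submission
  imports Defs
begin

text \<open>Let \<open>w\<close> be the greatest vertex of some order \<open>\<le>\<^sub>i\<close>. Then \<open>w\<close> dominates every
  face in \<open>\<le>\<^sub>i\<close>, so \<open>w\<close> is never an obstruction, and the complex splits into the
  deletion of \<open>w\<close> and the cone from \<open>w\<close> over its link. Both are again supremum sections
  on \<open>V - {w}\<close>, once for each order \<open>\<le>\<^sub>j\<close> only the vertices in an up-set \<open>A j\<close> are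
  required to dominate through \<open>\<le>\<^sub>j\<close> (for the link, the vertices above \<open>w\<close>). Induction
  on \<open>V\<close> for these relative sections makes deletion and link collapsible; the cone over a
  collapsible link collapses onto the deletion, which is collapsible.\<close>

lemma elementary_collapse_subset: "elementary_collapse \<Delta> \<Gamma> \<Longrightarrow> \<Gamma> \<subseteq> \<Delta>"
  by (auto simp: elementary_collapse_def)

lemma collapses_to_subset: "collapses_to \<Delta> \<Gamma> \<Longrightarrow> \<Gamma> \<subseteq> \<Delta>"
  unfolding collapses_to_def
  by (induction rule: rtranclp_induct) (auto dest: elementary_collapse_subset)

lemma facet_union_cone_iff:
  assumes D: "\<forall>K\<in>D. w \<notin> K" and L: "\<forall>K\<in>L. w \<notin> K" and K: "w \<notin> K"
  shows "facet (D \<union> insert w ` L) (insert w K) \<longleftrightarrow> facet L K"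
proof
  assume facet_cone: "facet (D \<union> insert w ` L) (insert w K)"
  then obtain K0 where "K0 \<in> L" "insert w K = insert w K0"
    using D by (auto simp: facet_def)
  then have KL: "K \<in> L"
    using L K by (metis insert_ident)
  show "facet L K" unfolding facet_def
  proof (intro conjI ballI impI)
    fix H assume "H \<in> L" "K \<subseteq> H"
    then have "insert w H = insert w K"
      using facet_cone by (auto simp: facet_def)
    then show "H = K" using L K \<open>H \<in> L\<close> by (metis insert_ident)
  qed (rule KL)
next
  assume facet: "facet L K"
  show "facet (D \<union> insert w ` L) (insert w K)" unfolding facet_def
  proof (intro conjI ballI impI)
    show "insert w K \<in> D \<union> insert w ` L" using facet by (simp add: facet_def)
    fix H assume H: "H \<in> D \<union> insert w ` L" "insert w K \<subseteq> H"
    then obtain H0 where H0: "H0 \<in> L" "H = insert w H0"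
      using D by auto
    then have "K \<subseteq> H0" using H K by auto
    with facet H0 have "H0 = K" by (simp add: facet_def)
    with H0 show "H = insert w K" by simp
  qed
qed

lemma union_cone_remove_cone_face:
  assumes D: "\<forall>K\<in>D. w \<notin> K" and L: "\<forall>K\<in>L. w \<notin> K" and F: "w \<notin> F"
  shows "(D \<union> insert w ` L) - {G \<in> D \<union> insert w ` L. insert w F \<subseteq> G}
    = D \<union> insert w ` (L - {G \<in> L. F \<subseteq> G})"
proof -
  have "insert w F \<subseteq> insert w Y \<longleftrightarrow> F \<subseteq> Y" for Y
    using F by blast
  then show ?thesis using D by auto
qed

lemma free_face_union_cone:
  assumes D: "\<forall>K\<in>D. w \<notin> K" and L: "\<forall>K\<in>L. w \<notin> K" and free: "free_face L F"
  shows "free_face (D \<union> insert w ` L) (insert w F)"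
proof -
  let ?T = "D \<union> insert w ` L"
  from free have FL: "F \<in> L" and not_facet: "\<not> facet L F"
    and unique: "\<exists>!G. facet L G \<and> F \<subseteq> G" by (auto simp: free_face_def)
  then obtain G where G: "facet L G" "F \<subseteq> G"
    and G_unique: "\<And>H. facet L H \<Longrightarrow> F \<subseteq> H \<Longrightarrow> H = G" by blast
  have wF: "w \<notin> F" using FL L by auto
  have wG: "w \<notin> G" using G L by (auto simp: facet_def)
  have "\<exists>!G. facet ?T G \<and> insert w F \<subseteq> G"
  proof (rule ex1I[of _ "insert w G"])
    show "facet ?T (insert w G) \<and> insert w F \<subseteq> insert w G"
      using facet_union_cone_iff[OF D L wG] G by auto
    fix H assume H: "facet ?T H \<and> insert w F \<subseteq> H"
    then obtain H0 where H0: "H0 \<in> L" "H = insert w H0"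
      using D by (auto simp: facet_def)
    have wH0: "w \<notin> H0" using H0 L by auto
    have "facet L H0" using facet_union_cone_iff[OF D L wH0] H H0 by simp
    moreover have "F \<subseteq> H0" using H H0 wF by auto
    ultimately show "H = insert w G" using G_unique H0 by simp
  qed
  then show ?thesis
    using FL not_facet facet_union_cone_iff[OF D L wF] by (auto simp: free_face_def)
qed

lemma elementary_collapse_union_cone:
  assumes "elementary_collapse L L'" and D: "\<forall>K\<in>D. w \<notin> K" and L: "\<forall>K\<in>L. w \<notin> K"
  shows "elementary_collapse (D \<union> insert w ` L) (D \<union> insert w ` L')"
proof -
  from assms(1) obtain F where free: "free_face L F" and L': "L' = L - {G \<in> L. F \<subseteq> G}"
    by (auto simp: elementary_collapse_def)
  have "w \<notin> F" using free L by (auto simp: free_face_def)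
  then show ?thesis
    unfolding elementary_collapse_def L'
    using free_face_union_cone[OF D L free] union_cone_remove_cone_face[OF D L]
    by (intro exI[of _ "insert w F"]) simp
qed

lemma collapses_to_union_cone:
  assumes "collapses_to L L'" and D: "\<forall>K\<in>D. w \<notin> K" and L: "\<forall>K\<in>L. w \<notin> K"
  shows "collapses_to (D \<union> insert w ` L) (D \<union> insert w ` L')"
  using assms(1) unfolding collapses_to_def
proof (induction rule: rtranclp_induct)
  case (step L1 L2)
  then have "\<forall>K\<in>L1. w \<notin> K"
    using L collapses_to_subset unfolding collapses_to_def by blast
  with step.hyps(2) show ?case
    using step.IH elementary_collapse_union_cone[OF _ D] by (meson rtranclp.rtrancl_into_rtrancl)
qed simp

lemma elementary_collapse_remove_edge:
  assumes D: "\<forall>K\<in>D. w \<notin> K" and "u \<noteq> w"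
  shows "elementary_collapse (D \<union> {{w}, {w, u}}) D"
proof -
  let ?T = "D \<union> {{w}, {w, u}}"
  have star: "H = {w} \<or> H = {w, u}" if "H \<in> ?T" "w \<in> H" for H
    using that D by auto
  have facet_edge: "facet ?T {w, u}"
    unfolding facet_def using star by auto
  have "\<not> facet ?T {w}"
    unfolding facet_def using \<open>u \<noteq> w\<close> by auto
  then have "facet ?T H \<and> {w} \<subseteq> H \<Longrightarrow> H = {w, u}" for H
    using star unfolding facet_def by auto
  then have "free_face ?T {w}"
    unfolding free_face_def using facet_edge \<open>\<not> facet ?T {w}\<close> by auto
  moreover have "D = ?T - {G \<in> ?T. {w} \<subseteq> G}"
    using D by auto
  ultimately show ?thesis
    unfolding elementary_collapse_def by blast
qed

lemma collapses_to_deletion: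
  assumes "collapsible L" and D: "\<forall>K\<in>D. w \<notin> K" and L: "\<forall>K\<in>L. w \<notin> K"
  shows "collapses_to (D \<union> insert w ` L) D"
proof -
  from \<open>collapsible L\<close> obtain u where u: "collapses_to L {{}, {u}}"
    by (auto simp: collapsible_def)
  then have "u \<noteq> w"
    using L collapses_to_subset by blast
  have "collapses_to (D \<union> insert w ` L) (D \<union> insert w ` {{}, {u}})"
    using collapses_to_union_cone[OF u D L] .
  moreover have "D \<union> insert w ` {{}, {u}} = D \<union> {{w}, {w, u}}"
    by auto
  moreover have "elementary_collapse (D \<union> {{w}, {w, u}}) D"
    using elementary_collapse_remove_edge[OF D \<open>u \<noteq> w\<close>] .
  ultimately show ?thesis
    unfolding collapses_to_def by simp
qed

lemma collapsible_union_cone: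
  assumes "collapsible D" and "L = {} \<or> collapsible L"
    and "\<forall>K\<in>D. w \<notin> K" and "\<forall>K\<in>L. w \<notin> K"
  shows "collapsible (D \<union> insert w ` L)"
proof (cases "L = {}")
  case False
  with assms(2) have "collapses_to (D \<union> insert w ` L) D"
    using collapses_to_deletion assms(3,4) by simp
  moreover obtain v where "collapses_to D {{}, {v}}"
    using assms(1) by (auto simp: collapsible_def)
  ultimately show ?thesis
    unfolding collapsible_def collapses_to_def by (meson rtranclp_trans)
qed (use assms(1) in simp)

definition upset_on :: "'a set \<Rightarrow> 'a rel \<Rightarrow> 'a set \<Rightarrow> bool" where
  "upset_on V r A \<longleftrightarrow> A \<subseteq> V \<and> (\<forall>x\<in>A. \<forall>y\<in>V. (x, y) \<in> r \<longrightarrow> y \<in> A)"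

definition relative_supremum_section ::
    "'a set \<Rightarrow> nat \<Rightarrow> (nat \<Rightarrow> 'a rel) \<Rightarrow> (nat \<Rightarrow> 'a set) \<Rightarrow> 'a set set" where
  "relative_supremum_section V d R A =
     {F. F \<subseteq> V \<and> (\<forall>v\<in>V. \<exists>i<d. v \<in> A i \<and> dominates_in_order (R i) v F)}"

lemma supremum_section_eq_relative:
  "supremum_section V d R = relative_supremum_section V d R (\<lambda>_. V)"
  by (auto simp: supremum_section_def relative_supremum_section_def dominates_in_rep_def)

lemma relative_supremum_section_empty_ground: "relative_supremum_section {} d R A = {{}}"
  by (auto simp: relative_supremum_section_def)

lemma empty_mem_relative_supremum_section:
  "F \<in> relative_supremum_section V d R A \<Longrightarrow> {} \<in> relative_supremum_section V d R A"
  by (auto simp: relative_supremum_section_def dominates_in_order_def)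

lemma upset_on_Diff: "upset_on V r A \<Longrightarrow> upset_on (V - {w}) r (A - {w})"
  by (auto simp: upset_on_def)

lemma upset_on_above:
  assumes "upset_on V r A" and "trans r"
  shows "upset_on (V - {w}) r {q \<in> A - {w}. (w, q) \<in> r}"
  unfolding upset_on_def
proof (intro conjI ballI impI)
  fix x y assume "x \<in> {q \<in> A - {w}. (w, q) \<in> r}" "y \<in> V - {w}" "(x, y) \<in> r"
  then show "y \<in> {q \<in> A - {w}. (w, q) \<in> r}"
    using assms unfolding upset_on_def by (auto dest: transD)
qed (use assms in \<open>auto simp: upset_on_def\<close>)

lemma linear_order_on_has_greatest:
  assumes lin: "linear_order_on U r" and "finite V" "V \<noteq> {}" "V \<subseteq> U"
  shows "\<exists>w\<in>V. dominates_in_order r w V"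
  using assms(2-) unfolding dominates_in_order_def
proof (induction V rule: finite_ne_induct)
  case (singleton x)
  then show ?case using lin by (auto simp: order_on_defs refl_on_def)
next
  case (insert x F)
  then obtain w where w: "w \<in> F" "\<forall>y\<in>F. (y, w) \<in> r" by blast
  have "x \<noteq> w" "x \<in> U" "w \<in> U" using insert.hyps insert.prems w(1) by auto
  then consider "(w, x) \<in> r" | "(x, w) \<in> r"
    using lin by (auto simp: order_on_defs total_on_def)
  then show ?case
  proof cases
    case 1
    have "(x, x) \<in> r" using lin \<open>x \<in> U\<close> by (auto simp: order_on_defs refl_on_def)
    moreover have "(y, x) \<in> r" if "y \<in> F" for y
      using lin w(2) that 1 by (auto simp: order_on_defs dest: transD)
    ultimately show ?thesis by blast
  next
    case 2
    then show ?thesis using w by blast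
  qed
qed

lemma set_family_split_vertex:
  "C = {F \<in> C. w \<notin> F} \<union> insert w ` {F. w \<notin> F \<and> insert w F \<in> C}"
proof -
  have "F \<in> insert w ` {G. w \<notin> G \<and> insert w G \<in> C}" if "F \<in> C" "w \<in> F" for F
    using that by (intro image_eqI[of _ _ "F - {w}"]) (auto simp: insert_absorb)
  then show ?thesis by auto
qed

lemma relative_supremum_section_deletion:
  assumes "i < d" "w \<in> A i" "dominates_in_order (R i) w V"
  shows "{F \<in> relative_supremum_section V d R A. w \<notin> F}
    = relative_supremum_section (V - {w}) d R (\<lambda>j. A j - {w})"
  using assms unfolding relative_supremum_section_def dominates_in_order_def by blast

lemma relative_supremum_section_link:
  assumes "i < d" "w \<in> V" "w \<in> A i" "dominates_in_order (R i) w V"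
  shows "{F. w \<notin> F \<and> insert w F \<in> relative_supremum_section V d R A}
    = relative_supremum_section (V - {w}) d R (\<lambda>j. {q \<in> A j - {w}. (w, q) \<in> R j})"
    (is "?link = ?section")
proof (intro set_eqI iffI)
  fix F assume "F \<in> ?link"
  then show "F \<in> ?section"
    by (auto simp: relative_supremum_section_def dominates_in_order_def)
next
  fix F assume F: "F \<in> ?section"
  then have "insert w F \<subseteq> V" "w \<notin> F"
    using \<open>w \<in> V\<close> by (auto simp: relative_supremum_section_def)
  moreover have "\<exists>j<d. v \<in> A j \<and> dominates_in_order (R j) v (insert w F)" if "v \<in> V" for v
  proof (cases "v = w")
    case True
    then show ?thesis
      using assms \<open>insert w F \<subseteq> V\<close> by (auto simp: dominates_in_order_def)
  next
    case False
    then show ?thesis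
      using F that by (auto simp: relative_supremum_section_def dominates_in_order_def)
  qed
  ultimately show "F \<in> ?link"
    by (simp add: relative_supremum_section_def)
qed

lemma relative_supremum_section_split:
  assumes "i < d" "w \<in> V" "w \<in> A i" "dominates_in_order (R i) w V"
  shows "relative_supremum_section V d R A =
    relative_supremum_section (V - {w}) d R (\<lambda>j. A j - {w}) \<union>
    insert w ` relative_supremum_section (V - {w}) d R (\<lambda>j. {q \<in> A j - {w}. (w, q) \<in> R j})"
  unfolding relative_supremum_section_deletion[of i d w A R V, OF assms(1,3,4), symmetric]
    relative_supremum_section_link[of i d w V A R, OF assms, symmetric]
  by (rule set_family_split_vertex)

lemma relative_supremum_section_apex:
  assumes lin: "\<forall>j<d. linear_order_on U (R j)" and "finite V" "V \<subseteq> U" "V \<noteq> {}"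
    and up: "\<forall>j<d. upset_on V (R j) (A j)" and "{} \<in> relative_supremum_section V d R A"
  obtains i w where "i < d" "w \<in> V" "w \<in> A i" "dominates_in_order (R i) w V"
proof -
  obtain v where "v \<in> V" using \<open>V \<noteq> {}\<close> by blast
  then obtain i where i: "i < d" "v \<in> A i"
    using \<open>{} \<in> relative_supremum_section V d R A\<close> by (auto simp: relative_supremum_section_def)
  obtain w where w: "w \<in> V" "dominates_in_order (R i) w V"
    using linear_order_on_has_greatest lin i(1) assms(2-4) by blast
  have "w \<in> A i"
    using up i w \<open>v \<in> V\<close> by (auto simp: upset_on_def dominates_in_order_def)
  then show thesis using i w by (intro that)
qed

lemma collapsible_relative_supremum_section:
  assumes lin: "\<forall>j<d. linear_order_on U (R j)"
  shows "finite V \<Longrightarrow> V \<subseteq> U \<Longrightarrow> V \<noteq> {} \<Longrightarrow> \<forall>j<d. upset_on V (R j) (A j) \<Longrightarrow>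
    {} \<in> relative_supremum_section V d R A \<Longrightarrow> collapsible (relative_supremum_section V d R A)"
proof (induction V arbitrary: A rule: finite_psubset_induct)
  case (psubset V)
  obtain i w where apex: "i < d" "w \<in> V" "w \<in> A i" "dominates_in_order (R i) w V"
    using relative_supremum_section_apex[OF lin psubset.hyps(1) psubset.prems] .
  define deletion where "deletion = relative_supremum_section (V - {w}) d R (\<lambda>j. A j - {w})"
  define link where
    "link = relative_supremum_section (V - {w}) d R (\<lambda>j. {q \<in> A j - {w}. (w, q) \<in> R j})"
  have split: "relative_supremum_section V d R A = deletion \<union> insert w ` link"
    unfolding deletion_def link_def by (rule relative_supremum_section_split[of i d w V A R, OF apex])
  have w_notin: "\<forall>F\<in>deletion. w \<notin> F" "\<forall>F\<in>link. w \<notin> F"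
    unfolding deletion_def link_def relative_supremum_section_def by auto
  show ?case
  proof (cases "V - {w} = {}")
    case True
    then have "deletion = {{}}" "link = {{}}"
      unfolding deletion_def link_def by (simp_all only: relative_supremum_section_empty_ground)
    then have "relative_supremum_section V d R A = {{}, {w}}"
      using split by auto
    then show ?thesis by (auto simp: collapsible_def collapses_to_def)
  next
    case False
    have smaller: "V - {w} \<subset> V" "V - {w} \<subseteq> U" using apex(2) psubset.prems(1) by auto
    note IH = psubset.IH[OF smaller False]
    have "{} \<in> deletion"
      using psubset.prems(4) unfolding split by blast
    moreover have "\<forall>j<d. upset_on (V - {w}) (R j) (A j - {w})"
      using psubset.prems(3) by (simp add: upset_on_Diff)
    ultimately have "collapsible deletion"
      unfolding deletion_def by (rule IH[rotated])
    have up_link: "\<forall>j<d. upset_on (V - {w}) (R j) {q \<in> A j - {w}. (w, q) \<in> R j}"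
    proof (intro allI impI)
      fix j assume "j < d"
      then have "upset_on V (R j) (A j)" "trans (R j)"
        using psubset.prems(3) lin by (simp_all add: order_on_defs)
      then show "upset_on (V - {w}) (R j) {q \<in> A j - {w}. (w, q) \<in> R j}"
        by (rule upset_on_above)
    qed
    have "collapsible link" if "link \<noteq> {}"
    proof -
      have "{} \<in> link"
        using that empty_mem_relative_supremum_section unfolding link_def by blast
      then show ?thesis
        unfolding link_def by (rule IH[OF up_link])
    qed
    then show ?thesis
      unfolding split using collapsible_union_cone[OF \<open>collapsible deletion\<close> _ w_notin] by blast
  qed
qed

theorem theorem2:
  fixes V :: "'a set" and d :: nat and R :: "nat \<Rightarrow> 'a rel"
  assumes "finite V" and "V \<noteq> {}" and "d \<ge> 1"
    and "d_representation V d R"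
  shows "collapsible (supremum_section V d R)"
proof -
  have lin: "\<forall>j<d. linear_order_on V (R j)"
    using assms(4) by (simp add: d_representation_def)
  have up: "\<forall>j<d. upset_on V (R j) V"
    by (simp add: upset_on_def)
  have "{} \<in> relative_supremum_section V d R (\<lambda>_. V)"
    using assms(3) by (auto simp: relative_supremum_section_def dominates_in_order_def
      intro!: exI[of _ 0])
  then show ?thesis
    unfolding supremum_section_eq_relative
    by (rule collapsible_relative_supremum_section[OF lin assms(1) order_refl assms(2) up])
qed

end
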